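(* Let $\mathbb{K}$ be a Cantor complete ordered field. Then for every valuation $v$ on $\mathbb{K}$, the metric space $(\mathbb{K},d)$, where $d(a,b)=e^{-v(a-b)}$ is the valuation metric, is spherically complete.
   Context: An ordered field is Cantor complete if every nested (decreasing) sequence of closed intervals $[a_n,b_n]$ has nonempty intersection. A metric space is spherically complete if every nested (decreasing) sequence of closed balls has nonempty intersection. A valuation on an ordered field $\mathbb{K}$ is a map $v:\mathbb{K}\to\mathbb{R}\cup\{\infty\}$ such that for all $x,y$: $v(x)=\infty$ iff $x=0$; $v(xy)=v(x)+v(y)$; $v(x+y)\ge\min\{v(x),v(y)\}$; and $|x|<|y|$ implies $v(x)\ge v(y)$ (with $r\le\infty$, $r+\infty=\infty$). The valuation metric is $d(a,b)=e^{-v(a-b)}$, with $e^{-\infty}=0$. *)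

theory Defs
  imports "HOL-Library.Extended_Real"
begin

definition cantor_complete :: "'a::linordered_field itself \<Rightarrow> bool" where
  "cantor_complete TYPE('a) \<longleftrightarrow>
     (\<forall>(a::nat \<Rightarrow> 'a) b.
        (\<forall>n. a n \<le> b n) \<and> (\<forall>n. {a (Suc n)..b (Suc n)} \<subseteq> {a n..b n})
        \<longrightarrow> (\<Inter>n. {a n..b n}) \<noteq> {})"

text \<open>A valuation with values in \<open>\<real> \<union> {\<infinity>}\<close>, modelled as extended reals
never taking the value \<open>-\<infinity>\<close>.\<close>
definition is_valuation :: "('a::linordered_field \<Rightarrow> ereal) \<Rightarrow> bool" where
  "is_valuation v \<longleftrightarrow>
     (\<forall>x. v x \<noteq> -\<infinity>) \<and>
     (\<forall>x. v x = \<infinity> \<longleftrightarrow> x = 0) \<and>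
     (\<forall>x y. v (x * y) = v x + v y) \<and>
     (\<forall>x y. v (x + y) \<ge> min (v x) (v y)) \<and>
     (\<forall>x y. \<bar>x\<bar> < \<bar>y\<bar> \<longrightarrow> v x \<ge> v y)"

definition val_dist :: "('a::linordered_field \<Rightarrow> ereal) \<Rightarrow> 'a \<Rightarrow> 'a \<Rightarrow> real" where
  "val_dist v a b = (if v (a - b) = \<infinity> then 0 else exp (- real_of_ereal (v (a - b))))"

definition dcball :: "('a \<Rightarrow> 'a \<Rightarrow> real) \<Rightarrow> 'a \<Rightarrow> real \<Rightarrow> 'a set" where
  "dcball d c r = {x. d c x \<le> r}"

definition spherically_complete :: "('a \<Rightarrow> 'a \<Rightarrow> real) \<Rightarrow> bool" where
  "spherically_complete d \<longleftrightarrow>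
     (\<forall>(c::nat \<Rightarrow> 'a) (r::nat \<Rightarrow> real).
        (\<forall>n. 0 \<le> r n) \<and> (\<forall>n. dcball d (c (Suc n)) (r (Suc n)) \<subseteq> dcball d (c n) (r n))
        \<longrightarrow> (\<Inter>n. dcball d (c n) (r n)) \<noteq> {})"

end

theory Submission
  imports Defs
begin

text \<open>The valuation metric is an ultrametric, so every point of a ball is a centre of it, and
\<open>d(c, x)\<close> is antitone in \<open>|c - x|\<close>. Hence if \<open>y\<close> lies in a ball \<open>B\<close> but not in a smaller
ball \<open>B'\<close> centred at \<open>c\<close>, then the interval \<open>[c - |c - y|, c + |c - y|]\<close> lies between \<open>B'\<close>
and \<open>B\<close>. If a nested sequence of balls had empty intersection, every centre would eventually
leave the balls, which yields a subsequence of balls interleaved with a nested sequence of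
closed intervals; a point common to all intervals, provided by Cantor completeness, is then
common to all balls.\<close>

lemma valuation_one:
  assumes "is_valuation v"
  shows "v 1 = 0"
proof -
  have "v 1 = v 1 + v 1" using assms unfolding is_valuation_def by (metis mult_1)
  moreover have "v 1 \<noteq> \<infinity>" "v 1 \<noteq> -\<infinity>"
    using assms unfolding is_valuation_def by simp_all
  ultimately show ?thesis by (cases "v 1") auto
qed

lemma valuation_uminus:
  assumes "is_valuation v"
  shows "v (- x) = v x"
proof -
  have mult: "v (x * y) = v x + v y" for x y
    using assms unfolding is_valuation_def by blast
  have "0 = v (-1) + v (-1)"
    using mult[of "-1" "-1"] valuation_one[OF assms] by simp
  moreover have "v (-1) \<noteq> \<infinity>" "v (-1) \<noteq> -\<infinity>"
    using assms unfolding is_valuation_def by simp_all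
  ultimately have "v (-1) = 0" by (cases "v (-1)") auto
  then show ?thesis using mult[of "-1" x] by simp
qed

lemma valuation_antimono_abs:
  assumes "is_valuation v" "\<bar>x\<bar> \<le> \<bar>y\<bar>"
  shows "v y \<le> v x"
proof (cases "\<bar>x\<bar> < \<bar>y\<bar>")
  case True
  then show ?thesis using assms(1) unfolding is_valuation_def by blast
next
  case False
  then have "x = y \<or> x = - y" using assms(2) by (auto simp: abs_if split: if_splits)
  then show ?thesis using valuation_uminus[OF assms(1)] by auto
qed

lemma centre_in_val_dist_dcball: "is_valuation v \<Longrightarrow> 0 \<le> r \<Longrightarrow> c \<in> dcball (val_dist v) c r"
  unfolding dcball_def val_dist_def is_valuation_def by simp

lemma val_dist_commute: "is_valuation v \<Longrightarrow> val_dist v a b = val_dist v b a"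
  using valuation_uminus[of v "a - b"] unfolding val_dist_def by simp

lemma val_dist_antimono:
  assumes "is_valuation v" "v (a - b) \<le> v (c - e)"
  shows "val_dist v c e \<le> val_dist v a b"
proof -
  have "v (a - b) \<noteq> -\<infinity>" "v (c - e) \<noteq> -\<infinity>"
    using assms(1) unfolding is_valuation_def by blast+
  with assms(2) show ?thesis
    unfolding val_dist_def by (cases "v (a - b)"; cases "v (c - e)") auto
qed

lemma val_dist_ultrametric:
  assumes "is_valuation v"
  shows "val_dist v a c \<le> max (val_dist v a b) (val_dist v b c)"
proof -
  have "min (v (a - b)) (v (b - c)) \<le> v (a - c)"
    using assms unfolding is_valuation_def by (metis diff_add_cancel add_diff_eq)
  then have "v (a - b) \<le> v (a - c) \<or> v (b - c) \<le> v (a - c)"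
    by (simp add: min_le_iff_disj)
  then show ?thesis
    using val_dist_antimono[OF assms] by (meson max.coboundedI1 max.coboundedI2)
qed

lemma val_dist_mono_abs:
  assumes "is_valuation v" "\<bar>c - x\<bar> \<le> \<bar>c - y\<bar>"
  shows "val_dist v c x \<le> val_dist v c y"
  using assms by (intro val_dist_antimono valuation_antimono_abs)

lemma dcball_recenter:
  assumes sym: "\<And>x y. d x y = d y x"
    and ultra: "\<And>x y z. d x z \<le> max (d x y) (d y z)"
    and "x \<in> dcball d c r"
  shows "dcball d x r = dcball d c r"
proof -
  have "d c x \<le> r" "d x c \<le> r" using assms(3) sym unfolding dcball_def by auto
  then have "d c z \<le> r \<longleftrightarrow> d x z \<le> r" for z
    using ultra[of c z x] ultra[of x z c] by linarith
  then show ?thesis unfolding dcball_def by blast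
qed

lemma interval_subset_val_dist_dcball:
  assumes "is_valuation v"
    and "x \<in> dcball (val_dist v) c r" "y \<in> dcball (val_dist v) c r"
  shows "{x - \<bar>x - y\<bar>..x + \<bar>x - y\<bar>} \<subseteq> dcball (val_dist v) c r"
proof
  have recentred: "dcball (val_dist v) x r = dcball (val_dist v) c r"
    using assms by (intro dcball_recenter val_dist_commute val_dist_ultrametric)
  fix z assume "z \<in> {x - \<bar>x - y\<bar>..x + \<bar>x - y\<bar>}"
  then have "val_dist v x z \<le> val_dist v x y"
    using assms(1) by (intro val_dist_mono_abs) auto
  moreover have "y \<in> dcball (val_dist v) x r" using assms(3) recentred by simp
  ultimately have "z \<in> dcball (val_dist v) x r" unfolding dcball_def by simp
  then show "z \<in> dcball (val_dist v) c r" using recentred by simp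
qed

lemma val_dist_dcball_subset_interval:
  assumes "is_valuation v" "y \<notin> dcball (val_dist v) x r"
  shows "dcball (val_dist v) x r \<subseteq> {x - \<bar>x - y\<bar>..x + \<bar>x - y\<bar>}"
proof
  fix z assume z: "z \<in> dcball (val_dist v) x r"
  show "z \<in> {x - \<bar>x - y\<bar>..x + \<bar>x - y\<bar>}"
  proof (rule ccontr)
    assume "z \<notin> {x - \<bar>x - y\<bar>..x + \<bar>x - y\<bar>}"
    then have "val_dist v x y \<le> val_dist v x z"
      using assms(1) by (intro val_dist_mono_abs) auto
    then show False using z assms(2) unfolding dcball_def by auto
  qed
qed

lemma decseq_Inter_empty_escaping_subseq:
  assumes "decseq B" "\<And>n. c n \<in> B n" "(\<Inter>n. B n) = {}"
  obtains s :: "nat \<Rightarrow> nat" where "strict_mono s" "\<And>k. c (s k) \<notin> B (s (Suc k))"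
proof -
  have escape: "\<exists>m. n < m \<and> c n \<notin> B m" for n
  proof -
    obtain m where m: "c n \<notin> B m" using assms(3) by blast
    have "\<not> m \<le> n" using m assms(1,2) by (auto simp: decseq_def)
    with m show ?thesis by (auto simp: not_le)
  qed
  then obtain s where "\<forall>k. s k < s (Suc k) \<and> c (s k) \<notin> B (s (Suc k))"
    using dependent_nat_choice[where P = "\<lambda>_ _. True" and Q = "\<lambda>_ n m. n < m \<and> c n \<notin> B m"]
      escape by blast
  then have "strict_mono s" "\<And>k. c (s k) \<notin> B (s (Suc k))"
    by (auto simp: strict_mono_Suc_iff)
  then show ?thesis by (rule that)
qed

lemma cantor_complete_interleaved_Inter_nonempty:
  fixes B :: "nat \<Rightarrow> 'a::linordered_field set"
  assumes "cantor_complete TYPE('a)" "\<And>k. a k \<le> b k"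
    and "\<And>k. {a k..b k} \<subseteq> B k" "\<And>k. B (Suc k) \<subseteq> {a k..b k}"
  shows "(\<Inter>k. B k) \<noteq> {}"
proof -
  have "{a (Suc k)..b (Suc k)} \<subseteq> {a k..b k}" for k
    using assms(3,4) by (meson order_trans)
  then have "(\<Inter>k. {a k..b k}) \<noteq> {}"
    using assms(1,2) unfolding cantor_complete_def by simp
  then show ?thesis using assms(3) by blast
qed

lemma cantor_complete_escaping_val_dist_balls_Inter_nonempty:
  fixes c :: "nat \<Rightarrow> 'a::linordered_field"
  assumes "cantor_complete TYPE('a)" "is_valuation v"
    and "\<And>k. c (Suc k) \<in> dcball (val_dist v) (c k) (r k)"
    and "\<And>k. c k \<notin> dcball (val_dist v) (c (Suc k)) (r (Suc k))"
    and "\<And>k. 0 \<le> r k"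
  shows "(\<Inter>k. dcball (val_dist v) (c k) (r k)) \<noteq> {}"
proof (rule cantor_complete_interleaved_Inter_nonempty[OF assms(1)])
  fix k
  show "{c (Suc k) - \<bar>c (Suc k) - c k\<bar>..c (Suc k) + \<bar>c (Suc k) - c k\<bar>}
      \<subseteq> dcball (val_dist v) (c k) (r k)"
    using assms(2,3,5) by (intro interval_subset_val_dist_dcball centre_in_val_dist_dcball)
  show "dcball (val_dist v) (c (Suc k)) (r (Suc k))
      \<subseteq> {c (Suc k) - \<bar>c (Suc k) - c k\<bar>..c (Suc k) + \<bar>c (Suc k) - c k\<bar>}"
    by (rule val_dist_dcball_subset_interval[OF assms(2,4)])
qed simp

theorem theorem2p6:
  fixes v :: "'a::linordered_field \<Rightarrow> ereal"
  assumes "cantor_complete TYPE('a)"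
    and "is_valuation v"
  shows "spherically_complete (val_dist v)"
  unfolding spherically_complete_def
proof (intro allI impI notI)
  fix c :: "nat \<Rightarrow> 'a" and r :: "nat \<Rightarrow> real"
  define B where "B n = dcball (val_dist v) (c n) (r n)" for n
  assume "(\<forall>n. 0 \<le> r n) \<and>
    (\<forall>n. dcball (val_dist v) (c (Suc n)) (r (Suc n)) \<subseteq> dcball (val_dist v) (c n) (r n))"
  then have nonneg: "\<And>n. 0 \<le> r n" and "decseq B" and centre: "\<And>n. c n \<in> B n"
    using centre_in_val_dist_dcball[OF assms(2)] by (auto simp: decseq_Suc_iff B_def)
  assume "(\<Inter>n. dcball (val_dist v) (c n) (r n)) = {}"
  then have empty: "(\<Inter>n. B n) = {}" by (simp add: B_def)
  obtain s where s: "strict_mono s" "\<And>k. c (s k) \<notin> B (s (Suc k))"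
    using decseq_Inter_empty_escaping_subseq[OF \<open>decseq B\<close> centre empty] by blast
  have "c (s (Suc k)) \<in> B (s k)" for k
    using \<open>decseq B\<close> centre s(1) by (metis decseqD less_imp_le strict_mono_Suc_iff subsetD)
  then have "(\<Inter>k. B (s k)) \<noteq> {}"
    using s(2) nonneg unfolding B_def
    by (intro cantor_complete_escaping_val_dist_balls_Inter_nonempty[OF assms, of "c \<circ> s" "r \<circ> s",
          simplified])
  then obtain x where "x \<in> B (s k)" for k by blast
  then have "x \<in> B n" for n
    using decseqD[OF \<open>decseq B\<close> seq_suble[OF s(1)]] by blast
  then show False using empty by blast
qed

end
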